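(* Let $G$ be a group with the unique root property. Let $\varphi_1:H_1\to H_1'$ and $\varphi_2:H_2\to H_2'$ be isomorphisms between subgroups of finite index in $G$. Suppose that $H_2$ is a normal subgroup of $G$ and that $\varphi_1|_{H_1\cap H_2}=\varphi_2|_{H_1\cap H_2}$. Then there exists an isomorphism $\varphi:H_1H_2\to H_1'H_2'$ with $\varphi|_{H_1}=\varphi_1$ and $\varphi|_{H_2}=\varphi_2$.
   Context: A group $G$ has the unique root property if for all $x,y\in G$ and every positive integer $n$, $x^n=y^n$ implies $x=y$. *)

theory Defs
  imports "HOL-Algebra.Algebra"
begin

definition unique_root_property :: "('a, 'b) monoid_scheme \<Rightarrow> bool" where
  "unique_root_property G \<longleftrightarrow>
     (\<forall>x \<in> carrier G. \<forall>y \<in> carrier G. \<forall>n::nat. n > 0 \<longrightarrow>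
        x [^]\<^bsub>G\<^esub> n = y [^]\<^bsub>G\<^esub> n \<longrightarrow> x = y)"

definition finite_index_subgroup :: "'a set \<Rightarrow> ('a, 'b) monoid_scheme \<Rightarrow> bool" where
  "finite_index_subgroup H G \<longleftrightarrow> subgroup H G \<and> finite (rcosets\<^bsub>G\<^esub> H)"

end

theory Submission
  imports Defs
begin

text \<open>Define \<open>\<phi>(h\<^sub>1h\<^sub>2) = \<phi>\<^sub>1(h\<^sub>1)\<phi>\<^sub>2(h\<^sub>2)\<close>; this is well defined because
  \<open>\<phi>\<^sub>1\<close> and \<open>\<phi>\<^sub>2\<close> agree on \<open>H\<^sub>1 \<inter> H\<^sub>2\<close>. It is a homomorphism as soon as
  \<open>\<phi>\<^sub>2(k\<inverse>hk) = \<phi>\<^sub>1(k)\<inverse>\<phi>\<^sub>2(h)\<phi>\<^sub>1(k)\<close> for \<open>k \<in> H\<^sub>1\<close>, \<open>h \<in> H\<^sub>2\<close>, and injective as soon as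
  \<open>\<phi>\<^sub>1(u) = \<phi>\<^sub>2(v)\<close> forces \<open>u = v\<close>. Both conditions follow from unique roots: since
  \<open>H\<^sub>1\<close> has finite index, some power \<open>h\<^sup>m\<close> lies in \<open>H\<^sub>1\<close>, so the \<open>m\<close>-th powers of the
  two sides of the first identity are the images of \<open>k\<inverse>h\<^sup>mk \<in> H\<^sub>1 \<inter> H\<^sub>2\<close> under
  \<open>\<phi>\<^sub>1\<close> and \<open>\<phi>\<^sub>2\<close>, which coincide; likewise some \<open>u\<^sup>m\<close> lies in \<open>H\<^sub>2\<close>, whence
  \<open>\<phi>\<^sub>2(u\<^sup>m) = \<phi>\<^sub>2(v\<^sup>m)\<close> and \<open>u\<^sup>m = v\<^sup>m\<close>.\<close>

locale subgroup_hom = group +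
  fixes H K :: "'a set" and f :: "'a \<Rightarrow> 'a"
  assumes subgroup_dom: "subgroup H G" and subgroup_cod: "subgroup K G"
    and hom: "f \<in> hom (G\<lparr>carrier := H\<rparr>) (G\<lparr>carrier := K\<rparr>)"
begin

lemma group_hom: "group_hom (G\<lparr>carrier := H\<rparr>) (G\<lparr>carrier := K\<rparr>) f"
  using subgroup_dom subgroup_cod hom
  by (simp add: group_hom_def group_hom_axioms_def subgroup.subgroup_is_group is_group)

lemma dom_carrier: "x \<in> H \<Longrightarrow> x \<in> carrier G"
  using subgroup.mem_carrier[OF subgroup_dom] .

lemma hom_closed: "x \<in> H \<Longrightarrow> f x \<in> K"
  using hom by (auto simp: hom_def)

lemma hom_carrier: "x \<in> H \<Longrightarrow> f x \<in> carrier G"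
  using hom_closed subgroup.mem_carrier[OF subgroup_cod] by blast

lemma hom_mult: "x \<in> H \<Longrightarrow> y \<in> H \<Longrightarrow> f (x \<otimes> y) = f x \<otimes> f y"
  using hom by (simp add: hom_def)

lemma hom_one: "f \<one> = \<one>"
  using group_hom.hom_one[OF group_hom] by simp

lemma hom_inv: "x \<in> H \<Longrightarrow> f (inv x) = inv (f x)"
  using group_hom.hom_inv[OF group_hom] subgroup_dom subgroup_cod hom_closed by simp

lemma hom_nat_pow: "x \<in> H \<Longrightarrow> f (x [^] (n::nat)) = f x [^] n"
  using group_hom.hom_nat_pow[OF group_hom]
    nat_pow_consistent[of x n H] nat_pow_consistent[of "f x" n K]
  by simp

end

lemma (in group) subgroup_nat_pow_closed:
  assumes "subgroup H G" "x \<in> H"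
  shows "x [^] (n::nat) \<in> H"
  using assms by (induction n) (auto intro: subgroup.m_closed subgroup.one_closed)

lemma (in group) finite_index_nat_pow_mem:
  assumes "finite_index_subgroup H G" "x \<in> carrier G"
  obtains n :: nat where "n > 0" "x [^] n \<in> H"
proof -
  have H: "subgroup H G" and fin: "finite (rcosets H)"
    using assms(1) unfolding finite_index_subgroup_def by auto
  have "range (\<lambda>i::nat. H #> x [^] i) \<subseteq> rcosets H"
    using assms(2) subgroup.subset[OF H] by (auto intro: rcosetsI)
  then have "\<not> inj (\<lambda>i::nat. H #> x [^] i)"
    using fin finite_subset finite_imageD infinite_UNIV_nat by blast
  then obtain i j :: nat where ij: "i < j" "H #> x [^] i = H #> x [^] j"
    using linorder_injI by (metis (no_types, lifting))
  have "x [^] j \<in> H #> x [^] i"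
    using ij(2) rcos_self[OF _ H] assms(2) by simp
  then have "x [^] j \<otimes> inv (x [^] i) \<in> H"
    using subgroup.rcos_module_imp[OF H is_group] assms(2) by simp
  also have "x [^] j = x [^] (j - i) \<otimes> x [^] i"
    using ij(1) nat_pow_mult[OF assms(2), of "j - i" i] by simp
  finally have "x [^] (j - i) \<in> H"
    using assms(2) by (simp add: m_assoc)
  with ij(1) show ?thesis
    using that[of "j - i"] by simp
qed

lemma (in group) conj_nat_pow:
  assumes "k \<in> carrier G" "h \<in> carrier G"
  shows "(inv k \<otimes> h \<otimes> k) [^] (n::nat) = inv k \<otimes> h [^] n \<otimes> k"
proof (induction n)
  case 0
  show ?case using assms by simp
next
  case (Suc n)
  have "(inv k \<otimes> h \<otimes> k) [^] Suc n = (inv k \<otimes> h [^] n \<otimes> k) \<otimes> (inv k \<otimes> h \<otimes> k)"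
    using Suc by simp
  also have "\<dots> = inv k \<otimes> h [^] n \<otimes> (k \<otimes> inv k) \<otimes> h \<otimes> k"
    using assms by (simp only: m_assoc m_closed inv_closed nat_pow_closed)
  finally show ?case
    using assms by (simp add: m_assoc)
qed

lemma (in group) mult_eq_mult_iff_inv:
  assumes "a \<in> carrier G" "b \<in> carrier G" "c \<in> carrier G" "d \<in> carrier G"
  shows "a \<otimes> b = c \<otimes> d \<longleftrightarrow> inv c \<otimes> a = d \<otimes> inv b"
  using assms by (metis inv_solve_left' inv_solve_right m_assoc m_closed inv_closed)

lemma (in group) mult_mult_conj:
  assumes "a \<in> carrier G" "b \<in> carrier G" "c \<in> carrier G" "d \<in> carrier G"
  shows "a \<otimes> b \<otimes> (c \<otimes> d) = a \<otimes> c \<otimes> (inv c \<otimes> b \<otimes> c \<otimes> d)"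
proof -
  have "a \<otimes> c \<otimes> (inv c \<otimes> b \<otimes> c \<otimes> d) = a \<otimes> (c \<otimes> inv c) \<otimes> b \<otimes> (c \<otimes> d)"
    using assms by (simp only: m_assoc m_closed inv_closed)
  then show ?thesis
    using assms by simp
qed

lemma unique_rootD:
  assumes "unique_root_property G" "x \<in> carrier G" "y \<in> carrier G" "n > 0"
    and "x [^]\<^bsub>G\<^esub> (n::nat) = y [^]\<^bsub>G\<^esub> n"
  shows "x = y"
  using assms unfolding unique_root_property_def by blast

locale compatible_isos = group G +
  \<phi>1: subgroup_hom G H1 H1' \<phi>1 + \<phi>2: subgroup_hom G H2 H2' \<phi>2
  for G (structure) and H1 H1' \<phi>1 and H2 H2' \<phi>2 +
  assumes bij1: "bij_betw \<phi>1 H1 H1'" and bij2: "bij_betw \<phi>2 H2 H2'"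
    and normal: "H2 \<lhd> G"
    and agree: "x \<in> H1 \<Longrightarrow> x \<in> H2 \<Longrightarrow> \<phi>1 x = \<phi>2 x"
begin

lemma conj_equivariant:
  assumes roots: "unique_root_property G" and fin: "finite_index_subgroup H1 G"
    and k: "k \<in> H1" and h: "h \<in> H2"
  shows "\<phi>2 (inv k \<otimes> h \<otimes> k) = inv (\<phi>1 k) \<otimes> \<phi>2 h \<otimes> \<phi>1 k"
proof -
  have kc: "k \<in> carrier G" and hc: "h \<in> carrier G"
    using \<phi>1.dom_carrier[OF k] \<phi>2.dom_carrier[OF h] .
  obtain m :: nat where m: "m > 0" "h [^] m \<in> H1"
    using finite_index_nat_pow_mem[OF fin hc] by blast
  have hm: "h [^] m \<in> H2"
    using subgroup_nat_pow_closed[OF \<phi>2.subgroup_dom h] .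
  have conj: "inv k \<otimes> h \<otimes> k \<in> H2" and conj_m: "inv k \<otimes> h [^] m \<otimes> k \<in> H2"
    using normal.inv_op_closed1[OF normal kc] h hm by blast+
  have conj_m1: "inv k \<otimes> h [^] m \<otimes> k \<in> H1"
    using k m(2) \<phi>1.subgroup_dom by (simp add: subgroup.m_closed subgroup.m_inv_closed)
  have "\<phi>2 (inv k \<otimes> h \<otimes> k) [^] m = \<phi>2 (inv k \<otimes> h [^] m \<otimes> k)"
    using \<phi>2.hom_nat_pow[OF conj] conj_nat_pow[OF kc hc] by simp
  also have "\<dots> = \<phi>1 (inv k \<otimes> h [^] m \<otimes> k)"
    using agree[OF conj_m1 conj_m] by simp
  also have "\<dots> = inv (\<phi>1 k) \<otimes> \<phi>2 (h [^] m) \<otimes> \<phi>1 k"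
    using k m(2) \<phi>1.subgroup_dom agree[OF m(2) hm]
    by (simp add: \<phi>1.hom_mult \<phi>1.hom_inv subgroup.m_closed subgroup.m_inv_closed)
  also have "\<dots> = (inv (\<phi>1 k) \<otimes> \<phi>2 h \<otimes> \<phi>1 k) [^] m"
    using \<phi>2.hom_nat_pow[OF h] conj_nat_pow \<phi>1.hom_carrier[OF k] \<phi>2.hom_carrier[OF h] by simp
  finally show ?thesis
    using unique_rootD[OF roots] m(1) \<phi>2.hom_carrier[OF conj] \<phi>1.hom_carrier[OF k]
      \<phi>2.hom_carrier[OF h] by simp
qed

lemma images_eq_imp_eq:
  assumes roots: "unique_root_property G" and fin: "finite_index_subgroup H2 G"
    and u: "u \<in> H1" and v: "v \<in> H2" and eq: "\<phi>1 u = \<phi>2 v"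
  shows "u = v"
proof -
  have uc: "u \<in> carrier G" and vc: "v \<in> carrier G"
    using \<phi>1.dom_carrier[OF u] \<phi>2.dom_carrier[OF v] .
  obtain m :: nat where m: "m > 0" "u [^] m \<in> H2"
    using finite_index_nat_pow_mem[OF fin uc] by blast
  have um: "u [^] m \<in> H1" and vm: "v [^] m \<in> H2"
    using subgroup_nat_pow_closed \<phi>1.subgroup_dom \<phi>2.subgroup_dom u v by blast+
  have "\<phi>2 (u [^] m) = \<phi>2 (v [^] m)"
    using agree[OF um m(2)] \<phi>1.hom_nat_pow[OF u] \<phi>2.hom_nat_pow[OF v] eq by simp
  then have "u [^] m = v [^] m"
    using bij_betw_imp_inj_on[OF bij2] m(2) vm by (auto dest: inj_onD)
  then show ?thesis
    using unique_rootD[OF roots uc vc m(1)] by simp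
qed

lemma image_prod_eq_iff:
  assumes "h1 \<in> H1" "k1 \<in> H1" "h2 \<in> H2" "k2 \<in> H2"
  shows "\<phi>1 h1 \<otimes> \<phi>2 h2 = \<phi>1 k1 \<otimes> \<phi>2 k2 \<longleftrightarrow> \<phi>1 (inv k1 \<otimes> h1) = \<phi>2 (k2 \<otimes> inv h2)"
  using assms mult_eq_mult_iff_inv[of "\<phi>1 h1" "\<phi>2 h2" "\<phi>1 k1" "\<phi>2 k2"]
    \<phi>1.subgroup_dom \<phi>2.subgroup_dom
  by (simp add: \<phi>1.hom_carrier \<phi>2.hom_carrier \<phi>1.hom_mult \<phi>2.hom_mult \<phi>1.hom_inv \<phi>2.hom_inv
      subgroup.m_inv_closed)

lemma image_prod_well_defined:
  assumes "h1 \<in> H1" "k1 \<in> H1" "h2 \<in> H2" "k2 \<in> H2" and "h1 \<otimes> h2 = k1 \<otimes> k2"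
  shows "\<phi>1 h1 \<otimes> \<phi>2 h2 = \<phi>1 k1 \<otimes> \<phi>2 k2"
proof -
  have "inv k1 \<otimes> h1 = k2 \<otimes> inv h2"
    using assms(5) mult_eq_mult_iff_inv[OF \<phi>1.dom_carrier[OF assms(1)] \<phi>2.dom_carrier[OF assms(3)]
        \<phi>1.dom_carrier[OF assms(2)] \<phi>2.dom_carrier[OF assms(4)]]
    by simp
  moreover have "inv k1 \<otimes> h1 \<in> H1" and "k2 \<otimes> inv h2 \<in> H2"
    using assms(1-4) \<phi>1.subgroup_dom \<phi>2.subgroup_dom
    by (simp_all add: subgroup.m_closed subgroup.m_inv_closed)
  ultimately show ?thesis
    using image_prod_eq_iff[OF assms(1-4)] agree by simp
qed

definition glue :: "'a \<Rightarrow> 'a" where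
  "glue x = (let p = SOME p. p \<in> H1 \<times> H2 \<and> x = fst p \<otimes> snd p in \<phi>1 (fst p) \<otimes> \<phi>2 (snd p))"

lemma glue_prod:
  assumes "h1 \<in> H1" "h2 \<in> H2"
  shows "glue (h1 \<otimes> h2) = \<phi>1 h1 \<otimes> \<phi>2 h2"
proof -
  define p where "p = (SOME p. p \<in> H1 \<times> H2 \<and> h1 \<otimes> h2 = fst p \<otimes> snd p)"
  have "\<exists>p. p \<in> H1 \<times> H2 \<and> h1 \<otimes> h2 = fst p \<otimes> snd p"
    using assms by auto
  then have "p \<in> H1 \<times> H2 \<and> h1 \<otimes> h2 = fst p \<otimes> snd p"
    unfolding p_def by (rule someI_ex)
  then show ?thesis
    using image_prod_well_defined[OF assms(1) _ assms(2)] unfolding glue_def p_def[symmetric]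
    by (auto simp: Let_def)
qed

lemma glue_restrict1: "x \<in> H1 \<Longrightarrow> glue x = \<phi>1 x"
  using glue_prod[of x \<one>] subgroup.one_closed[OF \<phi>2.subgroup_dom]
  by (simp add: \<phi>2.hom_one \<phi>1.dom_carrier \<phi>1.hom_carrier)

lemma glue_restrict2: "x \<in> H2 \<Longrightarrow> glue x = \<phi>2 x"
  using glue_prod[of \<one> x] subgroup.one_closed[OF \<phi>1.subgroup_dom]
  by (simp add: \<phi>1.hom_one \<phi>2.dom_carrier \<phi>2.hom_carrier)

lemma glue_image: "glue ` (H1 <#> H2) = H1' <#> H2'"
proof -
  have "H1' <#> H2' = (\<lambda>(h1, h2). \<phi>1 h1 \<otimes> \<phi>2 h2) ` (H1 \<times> H2)"
    using bij_betw_imp_surj_on[OF bij1] bij_betw_imp_surj_on[OF bij2]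
    unfolding set_mult_def by auto
  also have "\<dots> = glue ` (H1 <#> H2)"
    unfolding set_mult_def by (force simp: glue_prod)
  finally show ?thesis ..
qed

lemma glue_mult:
  assumes equivariant: "\<And>k h. k \<in> H1 \<Longrightarrow> h \<in> H2 \<Longrightarrow>
      \<phi>2 (inv k \<otimes> h \<otimes> k) = inv (\<phi>1 k) \<otimes> \<phi>2 h \<otimes> \<phi>1 k"
    and "x \<in> H1 <#> H2" "y \<in> H1 <#> H2"
  shows "glue (x \<otimes> y) = glue x \<otimes> glue y"
proof -
  obtain h1 h2 k1 k2 where h: "h1 \<in> H1" "h2 \<in> H2" "x = h1 \<otimes> h2"
    and k: "k1 \<in> H1" "k2 \<in> H2" "y = k1 \<otimes> k2"
    using assms(2,3) unfolding set_mult_def by blast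
  have conj: "inv k1 \<otimes> h2 \<otimes> k1 \<in> H2"
    using normal.inv_op_closed1[OF normal \<phi>1.dom_carrier[OF k(1)] h(2)] .
  have "glue (x \<otimes> y) = glue (h1 \<otimes> k1 \<otimes> (inv k1 \<otimes> h2 \<otimes> k1 \<otimes> k2))"
    using h(3) k(3) mult_mult_conj[OF \<phi>1.dom_carrier[OF h(1)] \<phi>2.dom_carrier[OF h(2)]
        \<phi>1.dom_carrier[OF k(1)] \<phi>2.dom_carrier[OF k(2)]]
    by simp
  also have "\<dots> = \<phi>1 (h1 \<otimes> k1) \<otimes> \<phi>2 (inv k1 \<otimes> h2 \<otimes> k1 \<otimes> k2)"
    using glue_prod conj h k \<phi>1.subgroup_dom \<phi>2.subgroup_dom by (simp add: subgroup.m_closed)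
  also have "\<dots> = \<phi>1 h1 \<otimes> \<phi>1 k1 \<otimes> (inv (\<phi>1 k1) \<otimes> \<phi>2 h2 \<otimes> \<phi>1 k1 \<otimes> \<phi>2 k2)"
    using h k conj equivariant by (simp add: \<phi>1.hom_mult \<phi>2.hom_mult)
  also have "\<dots> = \<phi>1 h1 \<otimes> \<phi>2 h2 \<otimes> (\<phi>1 k1 \<otimes> \<phi>2 k2)"
    using mult_mult_conj[OF \<phi>1.hom_carrier[OF h(1)] \<phi>2.hom_carrier[OF h(2)]
        \<phi>1.hom_carrier[OF k(1)] \<phi>2.hom_carrier[OF k(2)]]
    by simp
  also have "\<dots> = glue x \<otimes> glue y"
    using h k glue_prod by simp
  finally show ?thesis .
qed

lemma glue_inj_on:
  assumes cross: "\<And>u v. u \<in> H1 \<Longrightarrow> v \<in> H2 \<Longrightarrow> \<phi>1 u = \<phi>2 v \<Longrightarrow> u = v"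
  shows "inj_on glue (H1 <#> H2)"
proof (rule inj_onI)
  fix x y assume "x \<in> H1 <#> H2" "y \<in> H1 <#> H2" and eq: "glue x = glue y"
  then obtain h1 h2 k1 k2 where h: "h1 \<in> H1" "h2 \<in> H2" "x = h1 \<otimes> h2"
    and k: "k1 \<in> H1" "k2 \<in> H2" "y = k1 \<otimes> k2"
    unfolding set_mult_def by blast
  have "\<phi>1 (inv k1 \<otimes> h1) = \<phi>2 (k2 \<otimes> inv h2)"
    using eq h k glue_prod image_prod_eq_iff by simp
  moreover have "inv k1 \<otimes> h1 \<in> H1" and "k2 \<otimes> inv h2 \<in> H2"
    using h k \<phi>1.subgroup_dom \<phi>2.subgroup_dom
    by (simp_all add: subgroup.m_closed subgroup.m_inv_closed)
  ultimately have "inv k1 \<otimes> h1 = k2 \<otimes> inv h2"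
    using cross by blast
  then show "x = y"
    using h(3) k(3) mult_eq_mult_iff_inv[OF \<phi>1.dom_carrier[OF h(1)] \<phi>2.dom_carrier[OF h(2)]
        \<phi>1.dom_carrier[OF k(1)] \<phi>2.dom_carrier[OF k(2)]]
    by simp
qed

lemma glue_iso:
  assumes "\<And>k h. k \<in> H1 \<Longrightarrow> h \<in> H2 \<Longrightarrow>
      \<phi>2 (inv k \<otimes> h \<otimes> k) = inv (\<phi>1 k) \<otimes> \<phi>2 h \<otimes> \<phi>1 k"
    and "\<And>u v. u \<in> H1 \<Longrightarrow> v \<in> H2 \<Longrightarrow> \<phi>1 u = \<phi>2 v \<Longrightarrow> u = v"
  shows "glue \<in> iso (G\<lparr>carrier := H1 <#> H2\<rparr>) (G\<lparr>carrier := H1' <#> H2'\<rparr>)"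
proof -
  have "glue \<in> (H1 <#> H2) \<rightarrow> (H1' <#> H2')"
    using glue_image by blast
  then show ?thesis
    by (simp add: iso_def hom_def bij_betw_def glue_image
        glue_mult[OF assms(1)] glue_inj_on[OF assms(2)])
qed

end

theorem lemma2p6:
  fixes G :: "('a, 'b) monoid_scheme"
    and H1 H1' H2 H2' :: "'a set"
    and \<phi>1 \<phi>2 :: "'a \<Rightarrow> 'a"
  assumes "group G"
    and "unique_root_property G"
    and "finite_index_subgroup H1 G" and "finite_index_subgroup H1' G"
    and "finite_index_subgroup H2 G" and "finite_index_subgroup H2' G"
    and "\<phi>1 \<in> iso (G\<lparr>carrier := H1\<rparr>) (G\<lparr>carrier := H1'\<rparr>)"
    and "\<phi>2 \<in> iso (G\<lparr>carrier := H2\<rparr>) (G\<lparr>carrier := H2'\<rparr>)"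
    and "H2 \<lhd> G"
    and "\<forall>x \<in> H1 \<inter> H2. \<phi>1 x = \<phi>2 x"
  shows "\<exists>\<phi>. \<phi> \<in> iso (G\<lparr>carrier := H1 <#>\<^bsub>G\<^esub> H2\<rparr>) (G\<lparr>carrier := H1' <#>\<^bsub>G\<^esub> H2'\<rparr>)
            \<and> (\<forall>x \<in> H1. \<phi> x = \<phi>1 x) \<and> (\<forall>x \<in> H2. \<phi> x = \<phi>2 x)"
proof -
  interpret compatible_isos G H1 H1' \<phi>1 H2 H2' \<phi>2
    using assms
    unfolding compatible_isos_def compatible_isos_axioms_def subgroup_hom_def subgroup_hom_axioms_def
      finite_index_subgroup_def iso_def
    by auto
  have "glue \<in> iso (G\<lparr>carrier := H1 <#>\<^bsub>G\<^esub> H2\<rparr>) (G\<lparr>carrier := H1' <#>\<^bsub>G\<^esub> H2'\<rparr>)"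
    using glue_iso conj_equivariant[OF assms(2,3)] images_eq_imp_eq[OF assms(2,5)] by blast
  then show ?thesis
    using glue_restrict1 glue_restrict2 by blast
qed

end
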